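(* Let $p$ be an odd prime and let $n,s$ be positive integers such that $2n/s\geq 3$ is an odd integer; put $q=p^n$, $d=p^s$. Fix $\mu\in\mathbb{F}_{q^2}\setminus\mathbb{F}_q$ such that $\mu^d=u_1+u_2\mu$ with $u_1,u_2\in\mathbb{F}_q$ and $u_2$ a $(d-1)$-th power in $\mathbb{F}_{q^2}$, and write $\mu^{d+1}=w_1+w_2\mu$ with $w_1,w_2\in\mathbb{F}_q$. Let \[ J=\{(a^d+a,\,x_1+x_2\mu): a,x_1\in\mathbb{F}_q,\ x_2\in\mathbb{F}_q^*\},\qquad K=\bigcup_{\beta\in\mathbb{F}_q}\phi_{(\beta\mu)^d+\beta\mu}(J). \] If $X=(\mathbb{F}_{q^2}\times\mathbb{F}_{q^2})\setminus K$, then \[ X=\{((a+\beta\mu)^d+(a+\beta\mu),\ t_1+(a^d\beta+a\beta^du_2+\beta^{d+1}w_2)\mu): a,\beta,t_1\in\mathbb{F}_q\}. \]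
   Context: The map $x\mapsto x^d+x$ is a bijection of $\mathbb{F}_{q^2}$. For $k=\alpha^d+\alpha\in\mathbb{F}_{q^2}$ ($\alpha\in\mathbb{F}_{q^2}$), $\phi_k:\mathbb{F}_{q^2}\times\mathbb{F}_{q^2}\to\mathbb{F}_{q^2}\times\mathbb{F}_{q^2}$ is the map $(a^d+a,x)\mapsto(a^d+a+k,\ x+a^d\alpha+a\alpha^d+\alpha^{d+1})$. $\mathbb{F}_q$ is the subfield of $\mathbb{F}_{q^2}$ of order $q$. *)

theory Defs
  imports Main "HOL-Computational_Algebra.Primes"
begin

definition Tmap :: "nat \<Rightarrow> 'a::field \<Rightarrow> 'a" where
  "Tmap d x = x ^ d + x"

definition subfield_q :: "nat \<Rightarrow> 'a::field set" where
  "subfield_q q = {x. x ^ q = x}"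

text \<open>phi_k (a^d+a, x) = (a^d+a+k, x + a^d alpha + a alpha^d + alpha^(d+1)), where k = alpha^d+alpha;
  a and alpha are recovered as preimages under the bijection Tmap d.\<close>
definition phi :: "nat \<Rightarrow> 'a::field \<Rightarrow> 'a \<times> 'a \<Rightarrow> 'a \<times> 'a" where
  "phi d k yx = (let \<alpha> = the_inv (Tmap d) k; a = the_inv (Tmap d) (fst yx)
                 in (fst yx + k, snd yx + a ^ d * \<alpha> + a * \<alpha> ^ d + \<alpha> ^ (d + 1)))"

end

theory Submission
  imports Defs "HOL-Number_Theory.Residues" "HOL-Computational_Algebra.Polynomial"
begin

text \<open>
  As d is a power of the characteristic, T x = x^d + x is additive; a kernel element z satisfies
  z^d = -z, so z = z^(d^m) = (-1)^m z = -z with m = 2n/s odd, and T is bijective. In the F_q-basis 1, \<mu> of F_{q^2}, a point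
  (T(a + \<beta>\<mu>), t1 + t2 \<mu>) can only lie in the translate of J by \<phi>_{T(\<beta>\<mu>)}, and it does so exactly
  when t2 differs from the \<mu>-coordinate a^d \<beta> + a \<beta>^d u2 + \<beta>^(d+1) w2 of
  a^d \<beta>\<mu> + a (\<beta>\<mu>)^d + (\<beta>\<mu>)^(d+1).
\<close>

lemma power_card_eq_self:
  fixes x :: "'a::{field,finite}"
  shows "x ^ card (UNIV :: 'a set) = x"
proof (cases "x = 0")
  case False
  have "x * (\<Prod>y\<in>UNIV-{0}. x * y) = x * x ^ (card (UNIV :: 'a set) - 1) * \<Prod>(UNIV-{0})"
    by (simp add: prod.distrib mult_ac)
  also have "x * x ^ (card (UNIV :: 'a set) - 1) = x ^ card (UNIV :: 'a set)"
    using finite_UNIV_card_ge_0[where ?'a = 'a] by (simp flip: power_Suc)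
  also have "(\<Prod>y\<in>UNIV-{0}. x * y) = (\<Prod>y\<in>UNIV-{0}. y)"
    by (rule prod.reindex_bij_witness[of _ "\<lambda>y. y / x" "\<lambda>y. x * y"]) (use False in auto)
  finally show ?thesis
    by simp
qed (use finite_UNIV_card_ge_0[where ?'a = 'a] in auto)

lemma CHAR_eq_of_card_eq_prime_power:
  assumes "prime p" and "card (UNIV :: 'a::{field,finite} set) = p ^ n"
  shows "CHAR('a) = p"
proof -
  have "prime CHAR('a)"
    by (rule prime_CHAR_semidom, rule finite_imp_CHAR_pos) simp
  moreover have "CHAR('a) dvd p ^ n"
    using CHAR_dvd_CARD[where 'a = 'a] assms(2) by simp
  ultimately show ?thesis
    using assms(1) prime_dvd_power primes_dvd_imp_eq by blast
qed

lemma two_neq_zero_of_odd_card: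
  assumes "odd (card (UNIV :: 'a::{field,finite} set))"
  shows "(2::'a) \<noteq> 0"
proof
  assume "(2::'a) = 0"
  hence "CHAR('a) dvd 2"
    using of_nat_eq_0_iff_char_dvd[of 2, where 'a = 'a] by simp
  moreover have "prime CHAR('a)"
    by (rule prime_CHAR_semidom, rule finite_imp_CHAR_pos) simp
  ultimately have "CHAR('a) = 2"
    using primes_dvd_imp_eq two_is_prime_nat by blast
  thus False
    using CHAR_dvd_CARD[where 'a = 'a] assms by simp
qed

lemma power_diff_of_power_add:
  fixes x y :: "'a::ring_1"
  assumes "\<And>x y::'a. (x + y) ^ k = x ^ k + y ^ k"
  shows "(x - y) ^ k = x ^ k - y ^ k"
  using assms[of "x - y" y] by (simp add: algebra_simps)

lemma Tmap_add:
  assumes "\<And>x y::'a::field. (x + y) ^ d = x ^ d + y ^ d"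
  shows "Tmap d (x + y) = Tmap d x + Tmap d (y::'a)"
  unfolding Tmap_def assms by (simp add: algebra_simps)

lemma inj_Tmap:
  fixes d m :: nat
  assumes add: "\<And>x y::'a::{field,finite}. (x + y) ^ d = x ^ d + y ^ d"
    and card: "card (UNIV :: 'a set) = d ^ m" and "odd d" and "odd m"
  shows "inj (Tmap d :: 'a \<Rightarrow> 'a)"
proof (rule injI)
  fix x y :: 'a
  define z where "z = x - y"
  assume "Tmap d x = Tmap d y"
  hence "x ^ d - y ^ d = - z"
    by (simp add: Tmap_def z_def algebra_simps)
  hence z_power_d: "z ^ d = - z"
    unfolding z_def power_diff_of_power_add[OF add] .
  have z_power_iter: "z ^ (d ^ j) = (-1) ^ j * z" for j
  proof (induction j)
    case (Suc j)
    have "z ^ (d ^ Suc j) = (z ^ (d ^ j)) ^ d"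
      by (simp add: mult.commute flip: power_mult)
    also have "\<dots> = ((-1) ^ d) ^ j * z ^ d"
      by (simp add: Suc power_mult_distrib mult.commute flip: power_mult)
    also have "\<dots> = (-1) ^ Suc j * z"
      using \<open>odd d\<close> z_power_d by simp
    finally show ?case .
  qed simp
  have "z = - z"
    using power_card_eq_self[of z] z_power_iter[of m] card \<open>odd m\<close> by simp
  moreover have "(2::'a) \<noteq> 0"
    using card \<open>odd d\<close> by (intro two_neq_zero_of_odd_card) simp
  ultimately show "x = y"
    by (simp add: z_def eq_neg_iff_add_eq_0 flip: mult_2)
qed

lemma phi_Tmap:
  fixes a \<alpha> x :: "'a::field"
  assumes "inj (Tmap d :: 'a \<Rightarrow> 'a)"
    and "\<And>x y::'a. (x + y) ^ d = x ^ d + y ^ d"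
  shows "phi d (Tmap d \<alpha>) (Tmap d a, x) =
    (Tmap d (a + \<alpha>), x + a ^ d * \<alpha> + a * \<alpha> ^ d + \<alpha> ^ (d + 1))"
  by (simp add: phi_def Let_def the_inv_f_f[OF assms(1)] Tmap_add[OF assms(2)])

lemma mult_mem_subfield_q:
  "x \<in> subfield_q q \<Longrightarrow> y \<in> subfield_q q \<Longrightarrow> x * y \<in> subfield_q q"
  by (simp add: subfield_q_def power_mult_distrib)

lemma power_mem_subfield_q:
  assumes "x \<in> subfield_q q"
  shows "x ^ k \<in> subfield_q q"
proof -
  have "(x ^ k) ^ q = (x ^ q) ^ k"
    by (simp flip: power_mult add: mult.commute)
  thus ?thesis
    using assms by (simp add: subfield_q_def)
qed

locale quadratic_extension =
  fixes q :: nat and \<mu> :: "'a::{field,finite}"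
  assumes card_UNIV: "card (UNIV :: 'a set) = q ^ 2"
    and q_gt_1: "q > 1"
    and power_q_add: "\<And>x y::'a. (x + y) ^ q = x ^ q + y ^ q"
    and mu_notin: "\<mu> \<notin> subfield_q q"
begin

abbreviation Fq :: "'a set" where
  "Fq \<equiv> subfield_q q"

lemma power_q_diff: "(x - y) ^ q = x ^ q - (y::'a) ^ q"
  by (rule power_diff_of_power_add[OF power_q_add])

lemma add_mem_Fq: "x \<in> Fq \<Longrightarrow> y \<in> Fq \<Longrightarrow> x + y \<in> Fq"
  by (simp add: subfield_q_def power_q_add)

lemma diff_mem_Fq: "x \<in> Fq \<Longrightarrow> y \<in> Fq \<Longrightarrow> x - y \<in> Fq"
  by (simp add: subfield_q_def power_q_diff)

lemma power_q_q: "(x ^ q) ^ q = (x::'a)"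
  using power_card_eq_self[of x] card_UNIV by (simp add: power2_eq_square power_mult)

text \<open>
  L z = z^q - z is additive with kernel F_q, and its image consists of roots of X^q + X, so
  q^2 = |F_q| |L(F_{q^2})| \<le> |F_q| q.
\<close>

lemma card_Fq_ge: "q \<le> card Fq"
proof -
  define L where "L z = z ^ q - z" for z :: 'a
  have L_eq_iff: "L x = L y \<longleftrightarrow> x - y \<in> Fq" for x y
    by (auto simp: L_def subfield_q_def power_q_diff algebra_simps)
  define P :: "'a poly" where "P = monom 1 q + [:0, 1:]"
  have degree_P: "degree P = q"
    unfolding P_def using q_gt_1 by (subst degree_add_eq_left) (auto simp: degree_monom_eq)
  have "range L \<subseteq> {x. poly P x = 0}"
    by (auto simp: L_def P_def poly_monom power_q_diff power_q_q)
  hence "card (range L) \<le> q"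
    using card_poly_roots_bound[of P] degree_P q_gt_1
    by (metis card_mono degree_0 finite not_one_less_zero order_trans)
  define decompose where "decompose z = (z - inv_into UNIV L (L z), L z)" for z
  have "inj decompose"
    by (rule injI) (auto simp: decompose_def)
  moreover have "range decompose \<subseteq> Fq \<times> range L"
    by (auto simp: decompose_def f_inv_into_f simp flip: L_eq_iff)
  ultimately have "q * q \<le> card Fq * card (range L)"
    using card_inj_on_le[of decompose UNIV "Fq \<times> range L"] card_UNIV
    by (simp add: card_cartesian_product power2_eq_square)
  also have "\<dots> \<le> card Fq * q"
    using \<open>card (range L) \<le> q\<close> by simp
  finally show ?thesis
    using q_gt_1 by simp
qed

lemma mu_coords_unique:
  assumes "a \<in> Fq" "b \<in> Fq" "a' \<in> Fq" "b' \<in> Fq" and "a + b * \<mu> = a' + b' * \<mu>"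
  shows "a = a' \<and> b = b'"
proof (cases "b = b'")
  case False
  hence "\<mu> = (a - a') / (b' - b)"
    using assms(5) by (simp add: field_simps)
  hence "\<mu> ^ q = \<mu>"
    using assms(1-4) by (simp add: subfield_q_def power_divide power_q_diff)
  thus ?thesis
    using mu_notin by (simp add: subfield_q_def)
qed (use assms(5) in simp)

lemma mu_coords_exist: "\<exists>a\<in>Fq. \<exists>b\<in>Fq. z = a + b * \<mu>"
proof -
  define B where "B = (\<lambda>(a, b). a + b * \<mu>)"
  have "inj_on B (Fq \<times> Fq)"
  proof (rule inj_onI)
    fix ab ab'
    assume "ab \<in> Fq \<times> Fq" "ab' \<in> Fq \<times> Fq" "B ab = B ab'"
    thus "ab = ab'"
      using mu_coords_unique[of "fst ab" "snd ab" "fst ab'" "snd ab'"]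
      by (simp add: B_def split_beta prod_eq_iff mem_Times_iff)
  qed
  hence "card (B ` (Fq \<times> Fq)) = card Fq * card Fq"
    by (simp add: card_image card_cartesian_product)
  also have "\<dots> \<ge> card (UNIV :: 'a set)"
    using card_Fq_ge card_UNIV by (simp add: power2_eq_square mult_le_mono)
  finally have "B ` (Fq \<times> Fq) = UNIV"
    by (intro card_seteq) simp_all
  then obtain ab where "ab \<in> Fq \<times> Fq" and "z = B ab"
    by (metis UNIV_I imageE)
  thus ?thesis
    by (auto simp: B_def)
qed

lemma complement_of_translates:
  fixes T :: "'a \<Rightarrow> 'a" and \<Phi> :: "'a \<Rightarrow> 'a \<times> 'a \<Rightarrow> 'a \<times> 'a" and c c0 :: "'a \<Rightarrow> 'a \<Rightarrow> 'a"
  assumes "inj T"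
    and c_mem: "\<And>a \<beta>. a \<in> Fq \<Longrightarrow> \<beta> \<in> Fq \<Longrightarrow> c a \<beta> \<in> Fq"
    and c0_mem: "\<And>a \<beta>. a \<in> Fq \<Longrightarrow> \<beta> \<in> Fq \<Longrightarrow> c0 a \<beta> \<in> Fq"
    and \<Phi>_eq: "\<And>a \<beta> x. \<Phi> \<beta> (T a, x) = (T (a + \<beta> * \<mu>), x + c0 a \<beta> + c a \<beta> * \<mu>)"
  defines "J \<equiv> {(T a, x1 + x2 * \<mu>) | a x1 x2. a \<in> Fq \<and> x1 \<in> Fq \<and> x2 \<in> Fq - {0}}"
  shows "UNIV - (\<Union>\<beta>\<in>Fq. \<Phi> \<beta> ` J) =
    {(T (a + \<beta> * \<mu>), t1 + c a \<beta> * \<mu>) | a \<beta> t1. a \<in> Fq \<and> \<beta> \<in> Fq \<and> t1 \<in> Fq}"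
proof -
  have mem_translates_iff:
    "(T (a + \<beta> * \<mu>), t1 + t2 * \<mu>) \<in> (\<Union>\<beta>\<in>Fq. \<Phi> \<beta> ` J) \<longleftrightarrow> t2 \<noteq> c a \<beta>"
    if "a \<in> Fq" "\<beta> \<in> Fq" "t1 \<in> Fq" "t2 \<in> Fq" for a \<beta> t1 t2
  proof
    assume "(T (a + \<beta> * \<mu>), t1 + t2 * \<mu>) \<in> (\<Union>\<beta>\<in>Fq. \<Phi> \<beta> ` J)"
    then obtain \<beta>' where "\<beta>' \<in> Fq" and "(T (a + \<beta> * \<mu>), t1 + t2 * \<mu>) \<in> \<Phi> \<beta>' ` J"
      by (rule UN_E)
    from this(2) obtain j where "j \<in> J" and \<Phi>_j: "(T (a + \<beta> * \<mu>), t1 + t2 * \<mu>) = \<Phi> \<beta>' j"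
      by (rule imageE)
    from \<open>j \<in> J\<close> obtain a' x1 x2 where "a' \<in> Fq" "x1 \<in> Fq" "x2 \<in> Fq" "x2 \<noteq> 0"
      and "j = (T a', x1 + x2 * \<mu>)"
      unfolding J_def by blast
    with \<Phi>_j have T_eq: "T (a' + \<beta>' * \<mu>) = T (a + \<beta> * \<mu>)"
      and t_eq: "x1 + x2 * \<mu> + c0 a' \<beta>' + c a' \<beta>' * \<mu> = t1 + t2 * \<mu>"
      by (simp_all add: \<Phi>_eq)
    from T_eq \<open>inj T\<close> have "a' + \<beta>' * \<mu> = a + \<beta> * \<mu>"
      by (simp add: inj_eq)
    hence "a' = a \<and> \<beta>' = \<beta>"
      using mu_coords_unique \<open>a' \<in> Fq\<close> \<open>\<beta>' \<in> Fq\<close> that(1,2) by blast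
    with t_eq have "(x1 + c0 a \<beta>) + (x2 + c a \<beta>) * \<mu> = t1 + t2 * \<mu>"
      by (simp add: algebra_simps)
    moreover have "x1 + c0 a \<beta> \<in> Fq" "x2 + c a \<beta> \<in> Fq"
      using \<open>x1 \<in> Fq\<close> \<open>x2 \<in> Fq\<close> that(1,2) by (simp_all add: add_mem_Fq c0_mem c_mem)
    ultimately have "x2 + c a \<beta> = t2"
      using mu_coords_unique that(3,4) by blast
    with \<open>x2 \<noteq> 0\<close> show "t2 \<noteq> c a \<beta>"
      by auto
  next
    assume "t2 \<noteq> c a \<beta>"
    with that have "t1 - c0 a \<beta> \<in> Fq" and "t2 - c a \<beta> \<in> Fq - {0}"
      by (simp_all add: diff_mem_Fq c_mem c0_mem)
    with \<open>a \<in> Fq\<close> have "(T a, (t1 - c0 a \<beta>) + (t2 - c a \<beta>) * \<mu>) \<in> J"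
      unfolding J_def by blast
    moreover have "\<Phi> \<beta> (T a, (t1 - c0 a \<beta>) + (t2 - c a \<beta>) * \<mu>) = (T (a + \<beta> * \<mu>), t1 + t2 * \<mu>)"
      by (simp add: \<Phi>_eq algebra_simps)
    ultimately show "(T (a + \<beta> * \<mu>), t1 + t2 * \<mu>) \<in> (\<Union>\<beta>\<in>Fq. \<Phi> \<beta> ` J)"
      using \<open>\<beta> \<in> Fq\<close> by (metis UN_I image_eqI)
  qed
  have "surj T"
    using \<open>inj T\<close> by (simp add: finite_UNIV_inj_surj)
  have coords: "\<exists>a\<in>Fq. \<exists>\<beta>\<in>Fq. \<exists>t1\<in>Fq. \<exists>t2\<in>Fq. yx = (T (a + \<beta> * \<mu>), t1 + t2 * \<mu>)" for yx
    using \<open>surj T\<close> mu_coords_exist by (metis prod.collapse surjD)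
  show ?thesis
  proof (intro Set.set_eqI iffI)
    fix yx
    assume "yx \<in> UNIV - (\<Union>\<beta>\<in>Fq. \<Phi> \<beta> ` J)"
    moreover obtain a \<beta> t1 t2 where "a \<in> Fq" "\<beta> \<in> Fq" "t1 \<in> Fq" "t2 \<in> Fq"
      and yx: "yx = (T (a + \<beta> * \<mu>), t1 + t2 * \<mu>)"
      using coords[of yx] by blast
    ultimately have "t2 = c a \<beta>"
      using mem_translates_iff[of a \<beta> t1 t2] by simp
    with yx \<open>a \<in> Fq\<close> \<open>\<beta> \<in> Fq\<close> \<open>t1 \<in> Fq\<close>
    show "yx \<in> {(T (a + \<beta> * \<mu>), t1 + c a \<beta> * \<mu>) | a \<beta> t1. a \<in> Fq \<and> \<beta> \<in> Fq \<and> t1 \<in> Fq}"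
      by blast
  next
    fix yx
    assume "yx \<in> {(T (a + \<beta> * \<mu>), t1 + c a \<beta> * \<mu>) | a \<beta> t1. a \<in> Fq \<and> \<beta> \<in> Fq \<and> t1 \<in> Fq}"
    then obtain a \<beta> t1 where "a \<in> Fq" "\<beta> \<in> Fq" "t1 \<in> Fq"
      and "yx = (T (a + \<beta> * \<mu>), t1 + c a \<beta> * \<mu>)"
      by blast
    thus "yx \<in> UNIV - (\<Union>\<beta>\<in>Fq. \<Phi> \<beta> ` J)"
      using mem_translates_iff[of a \<beta> t1 "c a \<beta>"] c_mem by simp
  qed
qed

end

theorem lemma10:
  fixes p n s q d :: nat and \<mu> u1 u2 w1 w2 :: "'a::{field,finite}"
  assumes "prime p" and "odd p" and "n > 0" and "s > 0"
    and "s dvd 2 * n" and "odd (2 * n div s)" and "2 * n div s \<ge> 3"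
    and "q = p ^ n" and "d = p ^ s"
    and "card (UNIV :: 'a set) = q ^ 2"
    and "\<mu> \<notin> subfield_q q"
    and "u1 \<in> subfield_q q" and "u2 \<in> subfield_q q" and "\<mu> ^ d = u1 + u2 * \<mu>"
    and "\<exists>v::'a. u2 = v ^ (d - 1)"
    and "w1 \<in> subfield_q q" and "w2 \<in> subfield_q q" and "\<mu> ^ (d + 1) = w1 + w2 * \<mu>"
  defines "J \<equiv> {(Tmap d a, x1 + x2 * \<mu>) | a x1 x2.
                  a \<in> subfield_q q \<and> x1 \<in> subfield_q q \<and> x2 \<in> subfield_q q - {0}}"
  defines "K \<equiv> (\<Union>\<beta>\<in>subfield_q q. phi d (Tmap d (\<beta> * \<mu>)) ` J)"
  shows "UNIV - K =
    {(Tmap d (a + \<beta> * \<mu>), t1 + (a ^ d * \<beta> + a * \<beta> ^ d * u2 + \<beta> ^ (d + 1) * w2) * \<mu>) | a \<beta> t1.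
       a \<in> subfield_q q \<and> \<beta> \<in> subfield_q q \<and> t1 \<in> subfield_q q}"
proof -
  have card_p: "card (UNIV :: 'a set) = p ^ (2 * n)"
    using assms(8,10) by (simp add: power_mult mult.commute)
  have power_add: "(x + y) ^ (p ^ k) = x ^ (p ^ k) + y ^ (p ^ k)" for x y :: 'a and k
    using CHAR_eq_of_card_eq_prime_power[OF assms(1) card_p] assms(1) by (intro freshmans_dream') auto
  have "q > 1"
    using assms(3,8) prime_gt_1_nat[OF assms(1)] one_less_power by blast
  interpret quadratic_extension q \<mu>
    using \<open>q > 1\<close> assms(8,10,11) power_add by unfold_locales simp_all
  have power_d_add: "(x + y) ^ d = x ^ d + y ^ d" for x y :: 'a
    using power_add assms(9) by simp
  have "card (UNIV :: 'a set) = d ^ (2 * n div s)"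
    using card_p assms(5,9) by (simp flip: power_mult)
  hence inj: "inj (Tmap d :: 'a \<Rightarrow> 'a)"
    using power_d_add assms(2,6,9) by (intro inj_Tmap[where m = "2 * n div s"]) simp_all
  have "phi d (Tmap d (\<beta> * \<mu>)) (Tmap d a, x) =
      (Tmap d (a + \<beta> * \<mu>), x + (a * \<beta> ^ d * u1 + \<beta> ^ (d + 1) * w1)
        + (a ^ d * \<beta> + a * \<beta> ^ d * u2 + \<beta> ^ (d + 1) * w2) * \<mu>)" for a \<beta> x
  proof -
    have "(\<beta> * \<mu>) ^ d = \<beta> ^ d * (u1 + u2 * \<mu>)" and "(\<beta> * \<mu>) ^ (d + 1) = \<beta> ^ (d + 1) * (w1 + w2 * \<mu>)"
      by (simp_all only: power_mult_distrib assms(14,18))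
    thus ?thesis
      using phi_Tmap[OF inj power_d_add, of "\<beta> * \<mu>" a x] assms(9) by (simp add: algebra_simps)
  qed
  thus ?thesis
    unfolding J_def K_def
    by (intro complement_of_translates inj)
      (simp_all add: add_mem_Fq mult_mem_subfield_q power_mem_subfield_q assms(12,13,16,17))
qed

end
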